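(* Let $J\in\mathbb{R}^{m\times n}$ have full column rank, let $H\in\mathbb{R}^{m\times m}$ be symmetric positive definite, $q\in\mathbb{R}^m$, $c\in\mathbb{R}$, and consider minimizing $L(\theta)=\mathcal{L}(J\theta)$ with $\mathcal{L}(v)=\tfrac12 v^\top Hv+v^\top q+c$. Assume consistency: $J\theta^*=\arg\min_v\mathcal{L}(v)$ for some $\theta^*$. Let $\tilde H=(J^\top J)^{-1/2}J^\top HJ(J^\top J)^{-1/2}$. Then natural gradient descent with regularization $\lambda=0$ and step size $\eta=1/\lambda_{\max}(\tilde H)$, namely $$\theta_{t+1}=\theta_t-\eta\,(J^\top J)^{-1}J^\top(HJ\theta_t+q),$$ satisfies for all $t\ge0$ $$\|\theta_t-\theta^*\|_{J^\top J}\le\big(1-\kappa^{-1}(\tilde H)\big)^t\|\theta_0-\theta^*\|_{J^\top J}.$$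
   Context: $\|x\|_{A}=\sqrt{x^\top Ax}$ and $\kappa(\tilde H)=\lambda_{\max}(\tilde H)/\lambda_{\min}(\tilde H)$. *)

theory Defs
  imports "HOL-Analysis.Analysis"
begin

definition sym_mat :: "real^'n^'n \<Rightarrow> bool" where
  "sym_mat A \<longleftrightarrow> transpose A = A"

definition pos_def :: "real^'n^'n \<Rightarrow> bool" where
  "pos_def A \<longleftrightarrow> sym_mat A \<and> (\<forall>x. x \<noteq> 0 \<longrightarrow> x \<bullet> (A *v x) > 0)"

definition mat_sqrt :: "real^'n^'n \<Rightarrow> real^'n^'n" where
  "mat_sqrt A = (THE S. pos_def S \<and> S ** S = A)"

definition eigenvalues :: "real^'n^'n \<Rightarrow> real set" where
  "eigenvalues A = {l. \<exists>v. v \<noteq> 0 \<and> A *v v = l *\<^sub>R v}"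

definition lambda_max :: "real^'n^'n \<Rightarrow> real" where
  "lambda_max A = Max (eigenvalues A)"

definition lambda_min :: "real^'n^'n \<Rightarrow> real" where
  "lambda_min A = Min (eigenvalues A)"

definition cond_num :: "real^'n^'n \<Rightarrow> real" where
  "cond_num A = lambda_max A / lambda_min A"

definition A_norm :: "real^'n^'n \<Rightarrow> real^'n \<Rightarrow> real" where
  "A_norm A x = sqrt (x \<bullet> (A *v x))"

definition quad_loss :: "real^'m^'m \<Rightarrow> real^'m \<Rightarrow> real \<Rightarrow> real^'m \<Rightarrow> real" where
  "quad_loss H q c v = (1/2) * (v \<bullet> (H *v v)) + v \<bullet> q + c"

definition H_tilde :: "real^'n^'m \<Rightarrow> real^'m^'m \<Rightarrow> real^'n^'n" where
  "H_tilde J H = (let S = matrix_inv (mat_sqrt (transpose J ** J))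
                  in S ** (transpose J ** H ** J) ** S)"

end

theory Submission
  imports Defs
begin

(*
  Consistency makes theta_s a stationary point of L, so the gradient at theta_t is
  J^T H J (theta_t - theta_s). With S = (J^T J)^(1/2) and u_t = S (theta_t - theta_s), the
  natural gradient iteration becomes plain gradient descent u_(t+1) = (I - eta H~) u_t,
  because S (J^T J)^(-1) J^T H J = H~ S, while ||theta_t - theta_s||_(J^T J) = ||u_t||.
  In an orthonormal eigenbasis of the symmetric positive definite matrix H~, the map
  I - H~ / lambda_max scales the coordinate of an eigenvalue lambda by
  1 - lambda / lambda_max, which lies in [0, 1 - lambda_min / lambda_max]; hence each
  step contracts by 1 - 1/kappa.

  The spectral theorem needed for this (and for the existence and uniqueness of the
  square root) is obtained by maximising the Rayleigh quotient over the unit sphere of an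
  invariant subspace and recursing into the orthogonal complement of the maximiser.
*)

lemma nonneg_quadratic_imp_linear_coeff_zero:
  fixes a b :: real
  assumes "\<And>t. 0 \<le> a * t + b * t\<^sup>2"
  shows "a = 0"
proof (rule ccontr)
  assume "a \<noteq> 0"
  define d where "d = \<bar>b\<bar> + 1"
  have "d > 0" "b < d" unfolding d_def by auto
  have "a * (- a / d) + b * (- a / d)\<^sup>2 = a\<^sup>2 * (b - d) / d\<^sup>2"
    using \<open>d > 0\<close> by (simp add: field_simps power2_eq_square)
  also have "\<dots> < 0"
    using \<open>a \<noteq> 0\<close> \<open>d > 0\<close> \<open>b < d\<close> by (intro divide_neg_pos mult_pos_neg) auto
  finally show False using assms[of "- a / d"] by linarith
qed

lemma self_adjoint_rayleigh_max_eigenvector: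
  fixes f :: "'a::real_inner \<Rightarrow> 'a"
  assumes lin: "linear f" and adj: "\<And>x y. f x \<bullet> y = x \<bullet> f y"
    and V: "subspace V" "f ` V \<subseteq> V" and x: "x \<in> V" "x \<bullet> x = 1"
    and max: "\<And>y. y \<in> V \<Longrightarrow> y \<bullet> f y \<le> (x \<bullet> f x) * (y \<bullet> y)"
  shows "f x = (x \<bullet> f x) *\<^sub>R x"
proof -
  define m where "m = x \<bullet> f x"
  define w where "w = f x - m *\<^sub>R x"
  have "w \<in> V" unfolding w_def using V x by (auto intro: subspace_diff subspace_scale)
  have xw: "x \<bullet> w = 0" unfolding w_def m_def using x by (simp add: inner_diff_right)
  have wfx: "w \<bullet> f x = w \<bullet> w"
    using xw by (simp add: w_def inner_diff_left inner_diff_right inner_commute)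
  \<comment> \<open>Moving from \<open>x\<close> towards \<open>w\<close> would raise the Rayleigh quotient to first order unless \<open>w = 0\<close>.\<close>
  have "0 \<le> (-2 * (w \<bullet> w)) * t + (m * (w \<bullet> w) - w \<bullet> f w) * t\<^sup>2" for t
  proof -
    have "x + t *\<^sub>R w \<in> V" using V x \<open>w \<in> V\<close> by (auto intro: subspace_add subspace_scale)
    moreover have "(x + t *\<^sub>R w) \<bullet> f (x + t *\<^sub>R w) = m + 2 * t * (w \<bullet> w) + t\<^sup>2 * (w \<bullet> f w)"
      using wfx adj[of w x] linear_add[OF lin] linear_scale[OF lin]
      by (simp add: m_def inner_add_left inner_add_right inner_commute power2_eq_square algebra_simps)
    moreover have "(x + t *\<^sub>R w) \<bullet> (x + t *\<^sub>R w) = 1 + t\<^sup>2 * (w \<bullet> w)"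
      using x xw by (simp add: inner_add_left inner_add_right inner_commute power2_eq_square)
    ultimately have "m + 2 * t * (w \<bullet> w) + t\<^sup>2 * (w \<bullet> f w) \<le> m * (1 + t\<^sup>2 * (w \<bullet> w))"
      using max unfolding m_def by metis
    then show ?thesis by (simp add: algebra_simps)
  qed
  then have "w \<bullet> w = 0" using nonneg_quadratic_imp_linear_coeff_zero by fastforce
  then show ?thesis unfolding w_def m_def by simp
qed

lemma self_adjoint_subspace_eigenvector:
  fixes f :: "'a::euclidean_space \<Rightarrow> 'a"
  assumes lin: "linear f" and adj: "\<And>x y. f x \<bullet> y = x \<bullet> f y"
    and V: "subspace V" "f ` V \<subseteq> V" and "V \<noteq> {0}"
  obtains x where "x \<in> V" "x \<bullet> x = 1" "f x = (x \<bullet> f x) *\<^sub>R x"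
proof -
  obtain v where v: "v \<in> V" "v \<noteq> 0" using V \<open>V \<noteq> {0}\<close> subspace_0 by blast
  let ?K = "sphere 0 1 \<inter> V"
  have "compact ?K" using closed_subspace[OF V(1)] compact_sphere by blast
  moreover have "v /\<^sub>R norm v \<in> ?K" using v V by (simp add: subspace_scale)
  moreover have "continuous_on ?K (\<lambda>y. y \<bullet> f y)"
    using lin by (intro continuous_intros linear_continuous_on) (simp add: linear_conv_bounded_linear)
  ultimately obtain x where x: "x \<in> ?K" and x_max: "\<And>y. y \<in> ?K \<Longrightarrow> y \<bullet> f y \<le> x \<bullet> f x"
    using continuous_attains_sup[of ?K "\<lambda>y. y \<bullet> f y"] by blast
  have xV: "x \<in> V" and x1: "x \<bullet> x = 1" using x by (auto simp: dot_square_norm)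
  have "y \<bullet> f y \<le> (x \<bullet> f x) * (y \<bullet> y)" if "y \<in> V" for y
  proof (cases "y = 0")
    case False
    have "y /\<^sub>R norm y \<in> ?K" using that False V by (simp add: subspace_scale)
    from x_max[OF this] have "(y \<bullet> f y) / (norm y)\<^sup>2 \<le> x \<bullet> f x"
      using linear_scale[OF lin] by (simp add: power2_eq_square divide_inverse algebra_simps)
    then show ?thesis using False by (simp add: divide_le_eq power2_norm_eq_inner)
  qed (simp add: linear_0[OF lin])
  then show ?thesis
    using that xV x1 self_adjoint_rayleigh_max_eigenvector[OF lin adj V xV x1] by blast
qed

lemma self_adjoint_orthogonal_invariant:
  fixes f :: "'a::real_inner \<Rightarrow> 'a"
  assumes adj: "\<And>x y. f x \<bullet> y = x \<bullet> f y" and "f x = \<mu> *\<^sub>R x" and "f ` V \<subseteq> V"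
  shows "f ` (V \<inter> {y. orthogonal x y}) \<subseteq> V \<inter> {y. orthogonal x y}"
  using assms(2,3) unfolding orthogonal_def by (auto simp flip: adj)

lemma self_adjoint_subspace_eigenbasis:
  fixes f :: "'a::euclidean_space \<Rightarrow> 'a"
  assumes lin: "linear f" and adj: "\<And>x y. f x \<bullet> y = x \<bullet> f y"
  shows "subspace V \<Longrightarrow> f ` V \<subseteq> V \<Longrightarrow>
    \<exists>B\<subseteq>V. pairwise orthogonal B \<and> (\<forall>b\<in>B. norm b = 1) \<and> span B = V \<and>
      (\<forall>b\<in>B. f b = (b \<bullet> f b) *\<^sub>R b)"
proof (induction "dim V" arbitrary: V rule: less_induct)
  case less
  note V = less.prems
  show ?case
  proof (cases "V = {0}")
    case True
    then show ?thesis by (intro exI[of _ "{}"]) auto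
  next
    case False
    then obtain x where xV: "x \<in> V" and x1: "x \<bullet> x = 1" and eig: "f x = (x \<bullet> f x) *\<^sub>R x"
      using self_adjoint_subspace_eigenvector[OF lin adj V] by blast
    define W where "W = V \<inter> {y. orthogonal x y}"
    have W: "subspace W" unfolding W_def by (intro subspace_inter V subspace_orthogonal_to_vector)
    have W_inv: "f ` W \<subseteq> W"
      unfolding W_def using self_adjoint_orthogonal_invariant[OF adj eig V(2)] .
    have "x \<notin> W" using x1 unfolding W_def orthogonal_def by auto
    then have "W \<subset> V" using xV unfolding W_def by blast
    then have "dim W < dim V" using dim_psubset V W by (metis span_eq_iff)
    then obtain B where B: "B \<subseteq> W" "pairwise orthogonal B" "\<forall>b\<in>B. norm b = 1"
      "span B = W" "\<forall>b\<in>B. f b = (b \<bullet> f b) *\<^sub>R b"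
      using less.hyps[OF _ W W_inv] by blast
    show ?thesis
    proof (intro exI[of _ "insert x B"] conjI)
      show "insert x B \<subseteq> V" "pairwise orthogonal (insert x B)"
        using xV B(1,2) unfolding W_def pairwise_insert by (auto simp: orthogonal_commute)
      show "\<forall>b\<in>insert x B. norm b = 1" "\<forall>b\<in>insert x B. f b = (b \<bullet> f b) *\<^sub>R b"
        using B(3,5) x1 eig by (auto simp: norm_eq_1)
      have "y \<in> span (insert x B)" if "y \<in> V" for y
      proof -
        have "y - (x \<bullet> y) *\<^sub>R x \<in> W" unfolding W_def orthogonal_def
          using that xV V x1 by (auto simp: subspace_diff subspace_scale inner_diff_right)
        then show ?thesis using B(4) span_breakdown_eq by blast
      qed
      then show "span (insert x B) = V"
        using span_minimal[of "insert x B" V] xV B(1) V unfolding W_def by auto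
    qed
  qed
qed

definition orthonormal_basis :: "'a::real_inner set \<Rightarrow> bool" where
  "orthonormal_basis B \<longleftrightarrow>
     finite B \<and> pairwise orthogonal B \<and> (\<forall>b\<in>B. norm b = 1) \<and> span B = UNIV"

lemma self_adjoint_eigenbasis:
  fixes f :: "'a::euclidean_space \<Rightarrow> 'a"
  assumes "linear f" and "\<And>x y. f x \<bullet> y = x \<bullet> f y"
  obtains B where "orthonormal_basis B" and "\<And>b. b \<in> B \<Longrightarrow> f b = (b \<bullet> f b) *\<^sub>R b"
proof -
  obtain B where B: "pairwise orthogonal B" "\<forall>b\<in>B. norm b = 1" "span B = UNIV"
      "\<forall>b\<in>B. f b = (b \<bullet> f b) *\<^sub>R b"
    using self_adjoint_subspace_eigenbasis[OF assms, of UNIV] by auto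
  have "independent B"
    using B(1,2) by (intro pairwise_orthogonal_independent) auto
  then show ?thesis
    using that B independent_imp_finite unfolding orthonormal_basis_def by blast
qed

lemma orthonormal_basis_nonzero: "orthonormal_basis B \<Longrightarrow> b \<in> B \<Longrightarrow> b \<noteq> 0"
  unfolding orthonormal_basis_def by force

lemma orthonormal_basis_expansion:
  assumes "orthonormal_basis B"
  shows "(\<Sum>b\<in>B. (x \<bullet> b) *\<^sub>R b) = x"
  using assms orthonormal_basis_expand unfolding orthonormal_basis_def by blast

lemma orthonormal_basis_inner_sum:
  assumes "orthonormal_basis B" and "c \<in> B"
  shows "(\<Sum>b\<in>B. g b *\<^sub>R b) \<bullet> c = g c"
proof -
  have "g b * (b \<bullet> c) = (if b = c then g c else 0)" if "b \<in> B" for b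
    using assms that by (auto simp: orthonormal_basis_def pairwise_def orthogonal_def norm_eq_1)
  then have "(\<Sum>b\<in>B. g b * (b \<bullet> c)) = (\<Sum>b\<in>B. if b = c then g c else 0)"
    by (rule sum.cong[OF refl])
  then show ?thesis
    using assms by (simp add: inner_sum_left orthonormal_basis_def)
qed

lemma orthonormal_basis_parseval:
  assumes "orthonormal_basis B"
  shows "x \<bullet> x = (\<Sum>b\<in>B. (x \<bullet> b)\<^sup>2)"
proof -
  have "x \<bullet> x = (\<Sum>b\<in>B. (x \<bullet> b) *\<^sub>R b) \<bullet> x"
    using orthonormal_basis_expansion[OF assms] by simp
  also have "\<dots> = (\<Sum>b\<in>B. (x \<bullet> b) * (b \<bullet> x))" by (simp add: inner_sum_left)
  finally show ?thesis by (simp add: inner_commute power2_eq_square)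
qed

lemma orthonormal_basis_eqI:
  assumes "orthonormal_basis B" and "\<And>b. b \<in> B \<Longrightarrow> x \<bullet> b = y \<bullet> b"
  shows "x = y"
  using orthonormal_basis_expansion[OF assms(1), of x] orthonormal_basis_expansion[OF assms(1), of y]
    assms(2) by (metis (no_types, lifting) sum.cong)

lemma orthonormal_basis_nonzero_coeff:
  assumes "orthonormal_basis B" and "x \<noteq> 0"
  obtains b where "b \<in> B" and "x \<bullet> b \<noteq> 0"
  using orthonormal_basis_eqI[OF assms(1), of x 0] assms(2) by auto

lemma orthonormal_basis_norm_le:
  assumes B: "orthonormal_basis B"
    and coeff: "\<And>b. b \<in> B \<Longrightarrow> \<bar>y \<bullet> b\<bar> \<le> \<rho> * \<bar>x \<bullet> b\<bar>" and "0 \<le> \<rho>"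
  shows "norm y \<le> \<rho> * norm x"
proof -
  have "y \<bullet> y = (\<Sum>b\<in>B. \<bar>y \<bullet> b\<bar>\<^sup>2)" by (simp add: orthonormal_basis_parseval[OF B])
  also have "\<dots> \<le> (\<Sum>b\<in>B. (\<rho> * \<bar>x \<bullet> b\<bar>)\<^sup>2)"
    using coeff by (intro sum_mono power_mono) auto
  also have "\<dots> = (\<rho> * norm x)\<^sup>2"
    by (simp add: power_mult_distrib sum_distrib_left orthonormal_basis_parseval[OF B]
        power2_norm_eq_inner)
  finally show ?thesis
    using \<open>0 \<le> \<rho>\<close> by (metis power2_le_imp_le power2_norm_eq_inner mult_nonneg_nonneg norm_ge_zero)
qed

lemma orthonormal_basis_nonempty:
  assumes "orthonormal_basis (B :: 'a::euclidean_space set)"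
  shows "B \<noteq> {}"
  using assms nonzero_Basis SOME_Basis unfolding orthonormal_basis_def by force

lemma inner_transpose: "x \<bullet> (transpose A *v y) = (A *v x) \<bullet> (y :: real^'m)"
  by (metis dot_lmul_matrix inner_commute transpose_matrix_vector)

lemma sym_mat_iff_self_adjoint:
  "sym_mat (A :: real^'n^'n) \<longleftrightarrow> (\<forall>x y. (A *v x) \<bullet> y = x \<bullet> (A *v y))"
proof
  assume "sym_mat A"
  then show "\<forall>x y. (A *v x) \<bullet> y = x \<bullet> (A *v y)"
    unfolding sym_mat_def by (metis dot_lmul_matrix vector_transpose_matrix)
next
  assume adj: "\<forall>x y. (A *v x) \<bullet> y = x \<bullet> (A *v y)"
  have "transpose A *v x = A *v x" for x
    using adj vector_eq_rdot[of "transpose A *v x" "A *v x"] by (metis dot_lmul_matrix transpose_matrix_vector)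
  then show "sym_mat A" unfolding sym_mat_def by (simp add: matrix_eq)
qed

lemma sym_mat_self_adjoint: "sym_mat A \<Longrightarrow> (A *v x) \<bullet> y = x \<bullet> (A *v y)"
  using sym_mat_iff_self_adjoint by blast

lemma pos_def_self_adjoint: "pos_def A \<Longrightarrow> (A *v x) \<bullet> y = x \<bullet> (A *v y)"
  unfolding pos_def_def using sym_mat_self_adjoint by blast

lemma pos_def_pos: "pos_def A \<Longrightarrow> x \<noteq> 0 \<Longrightarrow> x \<bullet> (A *v x) > 0"
  unfolding pos_def_def by blast

lemma sym_mat_eigenbasis:
  fixes A :: "real^'n^'n"
  assumes "sym_mat A"
  obtains B where "orthonormal_basis B" and "\<And>b. b \<in> B \<Longrightarrow> A *v b = (b \<bullet> (A *v b)) *\<^sub>R b"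
  using self_adjoint_eigenbasis[of "(*v) A"] sym_mat_self_adjoint[OF assms]
  by (metis matrix_vector_mul_linear)

lemma eigenvalues_eigenbasis:
  fixes A :: "real^'n^'n"
  assumes A: "sym_mat A" and B: "orthonormal_basis B"
    and eig: "\<And>b. b \<in> B \<Longrightarrow> A *v b = (b \<bullet> (A *v b)) *\<^sub>R b"
  shows "eigenvalues A = (\<lambda>b. b \<bullet> (A *v b)) ` B"
proof
  show "(\<lambda>b. b \<bullet> (A *v b)) ` B \<subseteq> eigenvalues A"
    unfolding eigenvalues_def using eig orthonormal_basis_nonzero[OF B] by blast
  show "eigenvalues A \<subseteq> (\<lambda>b. b \<bullet> (A *v b)) ` B"
  proof
    fix \<mu> assume "\<mu> \<in> eigenvalues A"
    then obtain v where v: "v \<noteq> 0" "A *v v = \<mu> *\<^sub>R v" unfolding eigenvalues_def by blast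
    obtain b where b: "b \<in> B" "v \<bullet> b \<noteq> 0" using orthonormal_basis_nonzero_coeff[OF B v(1)] .
    have "\<mu> * (v \<bullet> b) = (A *v v) \<bullet> b" using v(2) by simp
    also have "\<dots> = v \<bullet> (A *v b)" using sym_mat_self_adjoint[OF A] .
    also have "\<dots> = (b \<bullet> (A *v b)) * (v \<bullet> b)" by (subst eig[OF b(1)]) simp
    finally show "\<mu> \<in> (\<lambda>b. b \<bullet> (A *v b)) ` B" using b by simp
  qed
qed

lemma pos_def_eigenvalue_bounds:
  fixes A :: "real^'n^'n"
  assumes A: "pos_def A" and B: "orthonormal_basis B"
    and eig: "\<And>b. b \<in> B \<Longrightarrow> A *v b = (b \<bullet> (A *v b)) *\<^sub>R b" and "b \<in> B"
  shows "0 < lambda_min A" "lambda_min A \<le> b \<bullet> (A *v b)" "b \<bullet> (A *v b) \<le> lambda_max A"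
proof -
  have ev: "eigenvalues A = (\<lambda>b. b \<bullet> (A *v b)) ` B"
    using A B eig eigenvalues_eigenbasis unfolding pos_def_def by blast
  have fin: "finite B" using B unfolding orthonormal_basis_def by blast
  have "c \<bullet> (A *v c) > 0" if "c \<in> B" for c
    using pos_def_pos[OF A] orthonormal_basis_nonzero[OF B that] .
  then show "0 < lambda_min A"
    unfolding lambda_min_def ev using fin orthonormal_basis_nonempty[OF B] by simp
  show "lambda_min A \<le> b \<bullet> (A *v b)" "b \<bullet> (A *v b) \<le> lambda_max A"
    unfolding lambda_min_def lambda_max_def ev using fin \<open>b \<in> B\<close> by auto
qed

lemma pos_def_cond_num_ge_1:
  fixes A :: "real^'n^'n"
  assumes "pos_def A"
  shows "1 \<le> cond_num A"
proof -
  obtain B where B: "orthonormal_basis B" "\<And>b. b \<in> B \<Longrightarrow> A *v b = (b \<bullet> (A *v b)) *\<^sub>R b"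
    using sym_mat_eigenbasis assms unfolding pos_def_def by blast
  obtain b where "b \<in> B" using orthonormal_basis_nonempty[OF B(1)] by blast
  from pos_def_eigenvalue_bounds[OF assms B this] show ?thesis
    unfolding cond_num_def by simp
qed

lemma pos_def_gradient_step_contraction:
  fixes A :: "real^'n^'n"
  assumes A: "pos_def A"
  shows "norm (x - (1 / lambda_max A) *\<^sub>R (A *v x)) \<le> (1 - 1 / cond_num A) * norm x"
proof -
  obtain B where B: "orthonormal_basis B" and eig: "\<And>b. b \<in> B \<Longrightarrow> A *v b = (b \<bullet> (A *v b)) *\<^sub>R b"
    using sym_mat_eigenbasis A unfolding pos_def_def by blast
  define \<rho> where "\<rho> = 1 - 1 / cond_num A"
  define y where "y = x - (1 / lambda_max A) *\<^sub>R (A *v x)"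
  have "\<bar>y \<bullet> b\<bar> \<le> \<rho> * \<bar>x \<bullet> b\<bar>" if b: "b \<in> B" for b
  proof -
    note bounds = pos_def_eigenvalue_bounds[OF A B eig b]
    define l where "l = b \<bullet> (A *v b)"
    have "(A *v x) \<bullet> b = l * (x \<bullet> b)"
      unfolding l_def using pos_def_self_adjoint[OF A] eig[OF b] by (metis inner_scaleR_right)
    then have "y \<bullet> b = (1 - l / lambda_max A) * (x \<bullet> b)"
      unfolding y_def by (simp add: inner_diff_left algebra_simps)
    moreover have "0 < lambda_max A" using bounds unfolding l_def by linarith
    then have "l / lambda_max A \<le> 1" "lambda_min A / lambda_max A \<le> l / lambda_max A"
      using bounds unfolding l_def by (simp_all add: divide_right_mono)
    ultimately show ?thesis
      unfolding \<rho>_def cond_num_def by (simp add: abs_mult mult_right_mono)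
  qed
  moreover have "0 \<le> \<rho>"
    using pos_def_cond_num_ge_1[OF A] unfolding \<rho>_def by (simp add: divide_le_eq_1)
  ultimately show ?thesis
    unfolding y_def[symmetric] \<rho>_def[symmetric] by (rule orthonormal_basis_norm_le[OF B])
qed

lemma matrix_inv_cancel:
  assumes "invertible A"
  shows "A ** matrix_inv A = mat 1" "matrix_inv A ** A = mat 1"
proof -
  from assms have "A ** matrix_inv A = mat 1 \<and> matrix_inv A ** A = mat 1"
    unfolding invertible_def matrix_inv_def by (rule someI_ex)
  then show "A ** matrix_inv A = mat 1" "matrix_inv A ** A = mat 1" by auto
qed

lemma matrix_inv_unique:
  assumes "invertible A" and "A ** B = mat 1"
  shows "matrix_inv A = B"
  by (metis assms matrix_inv_cancel(2) matrix_mul_assoc matrix_mul_lid matrix_mul_rid)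

lemma matrix_inv_mult:
  fixes A B :: "real^'n^'n"
  assumes "invertible A" and "invertible B"
  shows "matrix_inv (A ** B) = matrix_inv B ** matrix_inv A"
proof (rule matrix_inv_unique)
  show "invertible (A ** B)" using assms by (rule invertible_mult)
  have "A ** (B ** matrix_inv B) ** matrix_inv A = mat 1"
    using assms by (simp add: matrix_inv_cancel)
  then show "A ** B ** (matrix_inv B ** matrix_inv A) = mat 1"
    by (simp add: matrix_mul_assoc)
qed

lemma pos_def_inj: "pos_def A \<Longrightarrow> inj ((*v) A)"
  by (rule injI, rule ccontr) (metis pos_def_pos eq_iff_diff_eq_0 inner_zero_right
      less_irrefl matrix_vector_mult_diff_distrib)

lemma pos_def_invertible:
  fixes A :: "real^'n^'n"
  shows "pos_def A \<Longrightarrow> invertible A"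
  using pos_def_inj matrix_left_invertible_injective invertible_left_inverse by blast

lemma pos_def_matrix_inv:
  fixes A :: "real^'n^'n"
  assumes A: "pos_def A"
  shows "pos_def (matrix_inv A)"
  unfolding pos_def_def
proof (intro conjI allI impI)
  note inv = matrix_inv_cancel[OF pos_def_invertible[OF A]]
  have "A ** transpose (matrix_inv A) = mat 1"
    using A inv(2) by (metis matrix_transpose_mul pos_def_def sym_mat_def transpose_mat)
  then show "sym_mat (matrix_inv A)"
    unfolding sym_mat_def using matrix_inv_unique pos_def_invertible[OF A] by metis
  fix x :: "real^'n" assume "x \<noteq> 0"
  define y where "y = matrix_inv A *v x"
  have x: "x = A *v y" unfolding y_def by (simp add: matrix_vector_mul_assoc inv)
  then have "y \<noteq> 0" using \<open>x \<noteq> 0\<close> by auto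
  then have "0 < (A *v y) \<bullet> y"
    using pos_def_pos[OF A] by (simp add: inner_commute)
  then show "0 < x \<bullet> (matrix_inv A *v x)"
    unfolding y_def[symmetric] using x by (simp add: inner_commute)
qed

lemma pos_def_congruence:
  fixes J :: "real^'n^'m" and H :: "real^'m^'m"
  assumes H: "pos_def H" and J: "inj ((*v) J)"
  shows "pos_def (transpose J ** H ** J)"
  unfolding pos_def_def
proof (intro conjI allI impI)
  show "sym_mat (transpose J ** H ** J)"
    using H by (simp add: sym_mat_def pos_def_def matrix_transpose_mul matrix_mul_assoc)
  fix x :: "real^'n" assume "x \<noteq> 0"
  then have "J *v x \<noteq> 0" using J by (metis injD matrix_vector_mult_0_right)
  then have "0 < (J *v x) \<bullet> (H *v (J *v x))" by (rule pos_def_pos[OF H])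
  then show "0 < x \<bullet> ((transpose J ** H ** J) *v x)"
    by (simp add: inner_transpose del: transpose_matrix_vector flip: matrix_vector_mul_assoc)
qed

lemma orthonormal_basis_diagonal_pos_def:
  fixes B :: "(real^'n) set"
  assumes B: "orthonormal_basis B" and r_pos: "\<And>b. b \<in> B \<Longrightarrow> 0 < r b"
  obtains S where "pos_def S" and "\<And>x b. b \<in> B \<Longrightarrow> (S *v x) \<bullet> b = r b * (x \<bullet> b)"
proof -
  define f where "f x = (\<Sum>b\<in>B. (r b * (x \<bullet> b)) *\<^sub>R b)" for x
  have "linear f"
    unfolding f_def by (simp add: linear_iff inner_add_left sum.distrib scaleR_sum_right algebra_simps)
  define S where "S = matrix f"
  have S: "S *v x = f x" for x
    unfolding S_def using matrix_vector_mul(2)[OF \<open>linear f\<close>] by metis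
  have quad: "f x \<bullet> y = (\<Sum>b\<in>B. r b * (x \<bullet> b) * (y \<bullet> b))" for x y
    unfolding f_def inner_sum_left by (intro sum.cong refl) (simp add: inner_commute)
  have "pos_def S"
    unfolding pos_def_def sym_mat_iff_self_adjoint S
  proof (intro conjI allI impI)
    show "f x \<bullet> y = x \<bullet> f y" for x y
      unfolding quad inner_commute[of x] by (simp add: algebra_simps)
    fix x :: "real^'n" assume "x \<noteq> 0"
    then obtain c where c: "c \<in> B" "x \<bullet> c \<noteq> 0" using orthonormal_basis_nonzero_coeff[OF B] by blast
    have "0 < (\<Sum>b\<in>B. r b * (x \<bullet> b) * (x \<bullet> b))"
    proof (rule sum_pos2)
      show "finite B" using B unfolding orthonormal_basis_def by blast
      show "0 < r c * (x \<bullet> c) * (x \<bullet> c)"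
        using r_pos[OF c(1)] c(2) by (metis mult.assoc mult_pos_pos not_real_square_gt_zero)
      show "0 \<le> r b * (x \<bullet> b) * (x \<bullet> b)" if "b \<in> B" for b
        using r_pos[OF that] by (simp add: mult.assoc)
    qed fact
    then show "0 < x \<bullet> f x" by (simp add: quad inner_commute[of x])
  qed
  moreover have "(S *v x) \<bullet> b = r b * (x \<bullet> b)" if "b \<in> B" for x b
    unfolding S f_def using orthonormal_basis_inner_sum[OF B that] .
  ultimately show ?thesis using that by blast
qed

lemma pos_def_sqrt_exists:
  fixes G :: "real^'n^'n"
  assumes G: "pos_def G"
  obtains S where "pos_def S" and "S ** S = G"
proof -
  obtain B where B: "orthonormal_basis B" and eig: "\<And>b. b \<in> B \<Longrightarrow> G *v b = (b \<bullet> (G *v b)) *\<^sub>R b"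
    using sym_mat_eigenbasis G unfolding pos_def_def by blast
  have eigval_pos: "0 < b \<bullet> (G *v b)" if "b \<in> B" for b
    using pos_def_pos[OF G orthonormal_basis_nonzero[OF B that]] .
  then obtain S where S: "pos_def S"
    and S_coeff: "\<And>x b. b \<in> B \<Longrightarrow> (S *v x) \<bullet> b = sqrt (b \<bullet> (G *v b)) * (x \<bullet> b)"
    using orthonormal_basis_diagonal_pos_def[OF B, of "\<lambda>b. sqrt (b \<bullet> (G *v b))"] by auto
  have "((S ** S) *v x) \<bullet> b = (G *v x) \<bullet> b" if b: "b \<in> B" for x b
  proof -
    have "((S ** S) *v x) \<bullet> b = (b \<bullet> (G *v b)) * (x \<bullet> b)"
      using S_coeff[OF b] eigval_pos[OF b] by (simp add: mult.assoc flip: matrix_vector_mul_assoc)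
    also have "\<dots> = x \<bullet> (G *v b)"
      using eig[OF b] by (metis inner_scaleR_right)
    also have "\<dots> = (G *v x) \<bullet> b"
      using pos_def_self_adjoint[OF G] by simp
    finally show ?thesis .
  qed
  then have "S ** S = G"
    using orthonormal_basis_eqI[OF B] by (simp add: matrix_eq)
  with S show ?thesis using that by blast
qed

lemma pos_def_sqrt_unique:
  fixes S T :: "real^'n^'n"
  assumes S: "pos_def S" and T: "pos_def T" and eq: "S ** S = T ** T"
  shows "S = T"
proof -
  define D where "D = S - T"
  have D: "D *v x = S *v x - T *v x" for x
    unfolding D_def by (simp add: matrix_vector_mult_diff_rdistrib)
  have "sym_mat D"
    unfolding sym_mat_iff_self_adjoint D
    using pos_def_self_adjoint[OF S] pos_def_self_adjoint[OF T] by (simp add: inner_diff_left inner_diff_right)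
  then obtain B where B: "orthonormal_basis B" and eig: "\<And>b. b \<in> B \<Longrightarrow> D *v b = (b \<bullet> (D *v b)) *\<^sub>R b"
    using sym_mat_eigenbasis by blast
  have D_eig_zero: "D *v b = 0" if b: "b \<in> B" for b
  proof -
    define \<mu> where "\<mu> = b \<bullet> (D *v b)"
    have Db: "D *v b = \<mu> *\<^sub>R b" using eig b unfolding \<mu>_def by blast
    \<comment> \<open>\<open>S D + D T = S\<^sup>2 - T\<^sup>2 = 0\<close>; pairing with the eigenvector \<open>b\<close> gives
      \<open>\<mu> (b\<bullet>Sb + b\<bullet>Tb) = 0\<close>.\<close>
    have "S *v (D *v b) + D *v (T *v b) = S *v (S *v b) - T *v (T *v b)"
      by (simp add: D matrix_vector_mult_diff_distrib)
    also have "\<dots> = 0" using eq by (simp add: matrix_vector_mul_assoc)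
    finally have "0 = b \<bullet> (S *v (D *v b)) + (D *v b) \<bullet> (T *v b)"
      by (metis inner_add_right inner_zero_right sym_mat_self_adjoint[OF \<open>sym_mat D\<close>])
    then have "\<mu> * (b \<bullet> (S *v b) + b \<bullet> (T *v b)) = 0"
      unfolding Db by (simp add: algebra_simps)
    moreover have "b \<bullet> (S *v b) + b \<bullet> (T *v b) > 0"
      using pos_def_pos[OF S] pos_def_pos[OF T] orthonormal_basis_nonzero[OF B b] by (simp add: add_pos_pos)
    ultimately show ?thesis using Db by simp
  qed
  have "D *v x = 0" for x
    using orthonormal_basis_eqI[OF B, of "D *v x" 0] D_eig_zero sym_mat_self_adjoint[OF \<open>sym_mat D\<close>]
    by simp
  then show ?thesis unfolding D by (simp add: matrix_eq)
qed

lemma mat_sqrt: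
  fixes G :: "real^'n^'n"
  assumes "pos_def G"
  shows "pos_def (mat_sqrt G)" and "mat_sqrt G ** mat_sqrt G = G"
proof -
  have "\<exists>!S. pos_def S \<and> S ** S = G"
    using pos_def_sqrt_exists[OF assms] pos_def_sqrt_unique by metis
  then have "pos_def (mat_sqrt G) \<and> mat_sqrt G ** mat_sqrt G = G"
    unfolding mat_sqrt_def by (rule theI')
  then show "pos_def (mat_sqrt G)" "mat_sqrt G ** mat_sqrt G = G" by auto
qed

lemma A_norm_mat_sqrt:
  fixes G :: "real^'n^'n"
  assumes "pos_def G"
  shows "A_norm G x = norm (mat_sqrt G *v x)"
  using mat_sqrt[OF assms] pos_def_self_adjoint
  by (metis A_norm_def matrix_vector_mul_assoc norm_eq_sqrt_inner)

lemma pos_def_mat_1: "pos_def (mat 1 :: real^'n^'n)"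
  by (simp add: pos_def_def sym_mat_def)

lemma pos_def_gram:
  fixes J :: "real^'n^'m"
  shows "inj ((*v) J) \<Longrightarrow> pos_def (transpose J ** J)"
  using pos_def_congruence[OF pos_def_mat_1] by fastforce

lemma pos_def_H_tilde:
  fixes J :: "real^'n^'m" and H :: "real^'m^'m"
  assumes H: "pos_def H" and J: "inj ((*v) J)"
  shows "pos_def (H_tilde J H)"
proof -
  define Si where "Si = matrix_inv (mat_sqrt (transpose J ** J))"
  have "pos_def Si"
    unfolding Si_def by (intro pos_def_matrix_inv mat_sqrt pos_def_gram J)
  then have "H_tilde J H = transpose Si ** (transpose J ** H ** J) ** Si"
    unfolding H_tilde_def Si_def[symmetric] Let_def by (simp add: pos_def_def sym_mat_def)
  also have "pos_def \<dots>"
    using pos_def_congruence[OF pos_def_congruence[OF H J] pos_def_inj] \<open>pos_def Si\<close> .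
  finally show ?thesis .
qed

lemma quad_loss_minimizer_stationary:
  fixes H :: "real^'m^'m"
  assumes H: "sym_mat H" and min: "\<And>v. quad_loss H q c v0 \<le> quad_loss H q c v"
  shows "H *v v0 + q = 0"
proof -
  define r where "r = H *v v0 + q"
  have "quad_loss H q c (v0 + t *\<^sub>R r) = quad_loss H q c v0 + (r \<bullet> r) * t + (r \<bullet> (H *v r) / 2) * t\<^sup>2"
    for t
  proof -
    have "v0 \<bullet> (H *v r) = r \<bullet> (H *v v0)"
      using sym_mat_self_adjoint[OF H] by (simp add: inner_commute)
    moreover have "r \<bullet> r = r \<bullet> (H *v v0) + r \<bullet> q"
      by (simp add: r_def inner_add_right)
    ultimately show ?thesis
      unfolding quad_loss_def
      by (simp add: matrix_vector_right_distrib inner_add_left inner_add_right power2_eq_square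
          algebra_simps)
  qed
  then have "0 \<le> (r \<bullet> r) * t + (r \<bullet> (H *v r) / 2) * t\<^sup>2" for t
    using min[of "v0 + t *\<^sub>R r"] by simp
  then have "r \<bullet> r = 0" by (rule nonneg_quadratic_imp_linear_coeff_zero)
  then show ?thesis unfolding r_def by simp
qed

lemma mat_sqrt_similarity:
  fixes G M :: "real^'n^'n"
  assumes "pos_def G"
  defines "S \<equiv> mat_sqrt G"
  shows "S ** matrix_inv G ** M = (matrix_inv S ** M ** matrix_inv S) ** S"
proof -
  have S: "invertible S" "S ** S = G"
    unfolding S_def using mat_sqrt[OF assms(1)] pos_def_invertible by auto
  note cancel = matrix_inv_cancel[OF S(1)]
  have "matrix_inv G = matrix_inv S ** matrix_inv S"
    using matrix_inv_mult[OF S(1) S(1)] S(2) by simp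
  then have "S ** matrix_inv G ** M = (S ** matrix_inv S) ** matrix_inv S ** M"
    by (simp add: matrix_mul_assoc)
  also have "\<dots> = matrix_inv S ** M ** (matrix_inv S ** S)"
    by (simp add: cancel)
  also have "\<dots> = (matrix_inv S ** M ** matrix_inv S) ** S"
    by (simp add: matrix_mul_assoc)
  finally show ?thesis .
qed

lemma natural_gradient_error_step:
  fixes J :: "real^'n^'m" and H :: "real^'m^'m"
  assumes J: "inj ((*v) J)" and stationary: "H *v (J *v \<theta>s) + q = 0"
  defines "G \<equiv> transpose J ** J"
  shows "mat_sqrt G *v (x - \<eta> *\<^sub>R (matrix_inv G *v (transpose J *v (H *v (J *v x) + q))) - \<theta>s)
       = mat_sqrt G *v (x - \<theta>s) - \<eta> *\<^sub>R (H_tilde J H *v (mat_sqrt G *v (x - \<theta>s)))"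
proof -
  define M where "M = transpose J ** H ** J"
  have "q = - (H *v (J *v \<theta>s))"
    using stationary by (metis add.commute eq_neg_iff_add_eq_0)
  then have "H *v (J *v x) + q = H *v (J *v (x - \<theta>s))"
    by (simp add: matrix_vector_mult_diff_distrib)
  then have grad: "transpose J *v (H *v (J *v x) + q) = M *v (x - \<theta>s)"
    by (simp add: M_def matrix_vector_mul_assoc matrix_mul_assoc del: transpose_matrix_vector)
  have "mat_sqrt G ** matrix_inv G ** M = H_tilde J H ** mat_sqrt G"
    unfolding H_tilde_def Let_def G_def M_def
    using mat_sqrt_similarity pos_def_gram[OF J] by blast
  then have "mat_sqrt G *v (matrix_inv G *v (M *v (x - \<theta>s)))
      = H_tilde J H *v (mat_sqrt G *v (x - \<theta>s))"
    by (metis matrix_vector_mul_assoc matrix_mul_assoc)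
  moreover have "x - \<eta> *\<^sub>R v - \<theta>s = (x - \<theta>s) - \<eta> *\<^sub>R v" for v :: "real^'n"
    by simp
  ultimately show ?thesis
    unfolding grad by (simp only: matrix_vector_mult_diff_distrib matrix_vector_mult_scaleR)
qed

lemma geometric_decay:
  fixes a :: "nat \<Rightarrow> real"
  assumes "\<And>t. a (Suc t) \<le> r * a t" and "0 \<le> r"
  shows "a t \<le> r ^ t * a 0"
proof (induction t)
  case (Suc t)
  have "a (Suc t) \<le> r * a t" by (rule assms(1))
  also have "\<dots> \<le> r * (r ^ t * a 0)" using Suc assms(2) by (rule mult_left_mono)
  finally show ?case by simp
qed simp

theorem proposition3:
  fixes J :: "real^'n^'m" and H :: "real^'m^'m" and q :: "real^'m" and c :: real
    and \<theta>s :: "real^'n" and \<theta> :: "nat \<Rightarrow> real^'n" and \<eta> :: real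
  assumes full_rank: "rank J = CARD('n)"
    and H_spd: "pos_def H"
    and consistent: "\<forall>v. quad_loss H q c (J *v \<theta>s) \<le> quad_loss H q c v"
    and step: "\<eta> = 1 / lambda_max (H_tilde J H)"
    and iter: "\<forall>t. \<theta> (Suc t) = \<theta> t - \<eta> *\<^sub>R (matrix_inv (transpose J ** J) *v
                     (transpose J *v (H *v (J *v \<theta> t) + q)))"
  shows "\<forall>t. A_norm (transpose J ** J) (\<theta> t - \<theta>s)
             \<le> (1 - 1 / cond_num (H_tilde J H)) ^ t * A_norm (transpose J ** J) (\<theta> 0 - \<theta>s)"
proof
  fix t
  define G where "G = transpose J ** J"
  define u where "u s = mat_sqrt G *v (\<theta> s - \<theta>s)" for s
  have J: "inj ((*v) J)" using full_rank full_rank_injective by blast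
  have Ht: "pos_def (H_tilde J H)" using pos_def_H_tilde[OF H_spd J] .
  have "H *v (J *v \<theta>s) + q = 0"
    using quad_loss_minimizer_stationary H_spd consistent unfolding pos_def_def by blast
  then have "u (Suc s) = u s - \<eta> *\<^sub>R (H_tilde J H *v u s)" for s
    unfolding u_def G_def iter[rule_format] by (rule natural_gradient_error_step[OF J])
  then have "norm (u (Suc s)) \<le> (1 - 1 / cond_num (H_tilde J H)) * norm (u s)" for s
    unfolding step by (simp add: pos_def_gradient_step_contraction[OF Ht])
  moreover have "0 \<le> 1 - 1 / cond_num (H_tilde J H)"
    using pos_def_cond_num_ge_1[OF Ht] by (simp add: divide_le_eq_1)
  ultimately have "norm (u t) \<le> (1 - 1 / cond_num (H_tilde J H)) ^ t * norm (u 0)"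
    by (rule geometric_decay)
  then show "A_norm (transpose J ** J) (\<theta> t - \<theta>s)
             \<le> (1 - 1 / cond_num (H_tilde J H)) ^ t * A_norm (transpose J ** J) (\<theta> 0 - \<theta>s)"
    unfolding u_def G_def A_norm_mat_sqrt[OF pos_def_gram[OF J]] .
qed

end
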